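(* Let $K$ be a compact Hausdorff space with at least two points and let $\mathcal{A}$ be a non-empty subalgebra of $C(K,\mathbb{C})$. Suppose there exists $K_0\subset K$ such that $K\setminus K_0$ has at least two elements and: (0) for every $f\in C(K,\mathbb{C})$, either there exists a sequence $(f_n)_{n\ge0}\subset\mathcal{A}$ with $f_n(x)\to f(x)$ as $n\to+\infty$ for every $x\in K_0$, or there exists $g\in\mathcal{A}$ with $g(x)=f(x)$ for all $x\in K_0$; (1) $\mathcal{A}$ separates the points of $K\setminus K_0$ (for distinct $x,y\in K\setminus K_0$ there is $g\in\mathcal{A}$ with $g(x)\neq g(y)$) and separates any point of $K_0$ from any (distinct) point of $K$; (2) at least one of the following holds: (2a) for every $x\in K\setminus K_0$ there exists $g\in\mathcal{A}$ with $g(x)\neq0$, or (2b) $\mathcal{A}$ contains all constant functions; (3) for every $g\in\mathcal{A}$ its complex conjugate $\bar g=\mathrm{Re}(g)-i\,\mathrm{Im}(g)$ belongs to $\mathcal{A}$. Then $\mathcal{A}$ is dense in $C(K,\mathbb{C})$ for the uniform norm.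
   Context: $C(K,\mathbb{C})$ is the algebra of continuous complex-valued functions on $K$ with the uniform norm $\|g\|=\sup_{x\in K}|g(x)|$; density refers to this norm. *)

theory Defs
  imports "HOL-Analysis.Analysis"
begin

text \<open>Elements of C(K,C) are represented by functions 'a => complex that are continuous
on K; only their values on K matter.\<close>

definition cont_subalgebra :: "'a::topological_space set \<Rightarrow> ('a \<Rightarrow> complex) set \<Rightarrow> bool" where
  "cont_subalgebra K A \<longleftrightarrow>
     (\<forall>f\<in>A. continuous_on K f) \<and>
     (\<forall>f\<in>A. \<forall>g\<in>A. \<exists>h\<in>A. \<forall>x\<in>K. h x = f x + g x) \<and>
     (\<forall>f\<in>A. \<forall>g\<in>A. \<exists>h\<in>A. \<forall>x\<in>K. h x = f x * g x) \<and>
     (\<forall>f\<in>A. \<forall>c::complex. \<exists>h\<in>A. \<forall>x\<in>K. h x = c * f x)"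

definition uniformly_dense_in_C :: "'a::topological_space set \<Rightarrow> ('a \<Rightarrow> complex) set \<Rightarrow> bool" where
  "uniformly_dense_in_C K A \<longleftrightarrow>
     (\<forall>f. continuous_on K f \<longrightarrow>
        (\<forall>e>0. \<exists>g\<in>A. (SUP x\<in>K. norm (f x - g x)) \<le> e))"

end

theory Submission
  imports Defs
begin

text \<open>Hypotheses (0)--(2) only serve to show that \<open>A\<close> separates all points of \<open>K\<close> and vanishes
nowhere on \<open>K\<close>: at a point of \<open>K0\<close> because \<open>1\<close> is a pointwise limit of elements of \<open>A\<close> there.
For a self-adjoint subalgebra with these two properties, a finite sum of functions \<open>\<bar>g\<bar>\<^sup>2\<close>
gives some \<open>h \<in> A\<close> that is real and positive on the compact set \<open>K\<close>. The real Stone-Weierstrass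
theorem applied to \<open>Re A + \<real>\<close> approximates \<open>u / h\<close>, and multiplying by \<open>h\<close> removes the constants;
real and imaginary parts are then approximated separately.\<close>

lemma nonvanishing_if_approximates_one:
  fixes A :: "('a \<Rightarrow> complex) set"
  assumes "x \<in> S"
    and "(\<exists>fs. (\<forall>n. fs n \<in> A) \<and> (\<forall>x\<in>S. (\<lambda>n. fs n x) \<longlonglongrightarrow> 1)) \<or> (\<exists>g\<in>A. \<forall>x\<in>S. g x = 1)"
  shows "\<exists>g\<in>A. g x \<noteq> 0"
proof (rule ccontr)
  assume vanish: "\<not> (\<exists>g\<in>A. g x \<noteq> 0)"
  from assms(2) show False
  proof
    assume "\<exists>fs. (\<forall>n. fs n \<in> A) \<and> (\<forall>x\<in>S. (\<lambda>n. fs n x) \<longlonglongrightarrow> 1)"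
    then obtain fs where "\<forall>n. fs n \<in> A" "(\<lambda>n. fs n x) \<longlonglongrightarrow> 1"
      using \<open>x \<in> S\<close> by blast
    moreover from this(1) vanish have "(\<lambda>n. fs n x) = (\<lambda>n. 0)"
      by auto
    ultimately have "(\<lambda>n. 0 :: complex) \<longlonglongrightarrow> 1"
      by simp
    then show False
      using LIMSEQ_unique tendsto_const zero_neq_one by blast
  qed (use \<open>x \<in> S\<close> vanish in force)
qed

locale selfadjoint_subalgebra =
  fixes K :: "'a::t2_space set" and A :: "('a \<Rightarrow> complex) set"
  assumes compact: "compact K"
    and subalgebra: "cont_subalgebra K A"
    and nonempty: "A \<noteq> {}"
    and cnj_closed: "\<And>g. g \<in> A \<Longrightarrow> \<exists>h\<in>A. \<forall>x\<in>K. h x = cnj (g x)"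
begin

lemma continuous: "g \<in> A \<Longrightarrow> continuous_on K g"
  using subalgebra unfolding cont_subalgebra_def by blast

lemma add_closed: "f \<in> A \<Longrightarrow> g \<in> A \<Longrightarrow> \<exists>h\<in>A. \<forall>x\<in>K. h x = f x + g x"
  using subalgebra unfolding cont_subalgebra_def by blast

lemma mult_closed: "f \<in> A \<Longrightarrow> g \<in> A \<Longrightarrow> \<exists>h\<in>A. \<forall>x\<in>K. h x = f x * g x"
  using subalgebra unfolding cont_subalgebra_def by blast

lemma scale_closed: "f \<in> A \<Longrightarrow> \<exists>h\<in>A. \<forall>x\<in>K. h x = c * f x"
  using subalgebra unfolding cont_subalgebra_def by blast

lemma zero_closed: "\<exists>z\<in>A. \<forall>x\<in>K. z x = 0"
  using nonempty scale_closed[where c = 0] by fastforce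

lemma Re_closed:
  assumes "g \<in> A"
  shows "\<exists>r\<in>A. \<forall>x\<in>K. r x = complex_of_real (Re (g x))"
proof -
  obtain h where h: "h \<in> A" "\<forall>x\<in>K. h x = cnj (g x)"
    using cnj_closed assms by blast
  obtain s where s: "s \<in> A" "\<forall>x\<in>K. s x = g x + h x"
    using add_closed assms h(1) by blast
  obtain r where "r \<in> A" "\<forall>x\<in>K. r x = 1/2 * s x"
    using scale_closed s(1) by blast
  with s h show ?thesis
    by (auto simp: complex_add_cnj)
qed

lemma norm_square_closed:
  assumes "g \<in> A"
  shows "\<exists>q\<in>A. \<forall>x\<in>K. q x = complex_of_real ((cmod (g x))\<^sup>2)"
proof -
  obtain h where h: "h \<in> A" "\<forall>x\<in>K. h x = cnj (g x)"
    using cnj_closed assms by blast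
  obtain q where "q \<in> A" "\<forall>x\<in>K. q x = g x * h x"
    using mult_closed[OF assms h(1)] by blast
  with h show ?thesis
    by (metis complex_norm_square)
qed

lemma sum_closed:
  assumes "finite I" "\<And>i. i \<in> I \<Longrightarrow> f i \<in> A"
  shows "\<exists>g\<in>A. \<forall>x\<in>K. g x = (\<Sum>i\<in>I. f i x)"
  using assms
proof (induction I rule: finite_induct)
  case empty
  then show ?case using zero_closed by simp
next
  case (insert i I)
  then obtain g where "g \<in> A" "\<forall>x\<in>K. g x = (\<Sum>i\<in>I. f i x)"
    by blast
  with insert show ?case
    using add_closed[of "f i" g] by auto
qed

lemma exists_positive:
  assumes nonvanishing: "\<And>x. x \<in> K \<Longrightarrow> \<exists>g\<in>A. g x \<noteq> 0"
  shows "\<exists>h\<in>A. \<forall>x\<in>K. Im (h x) = 0 \<and> 0 < Re (h x)"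
proof -
  have "\<exists>q U. q \<in> A \<and> (\<forall>y\<in>K. Im (q y) = 0 \<and> 0 \<le> Re (q y))
          \<and> open U \<and> x \<in> U \<and> (\<forall>y\<in>U \<inter> K. 0 < Re (q y))" if "x \<in> K" for x
  proof -
    obtain g where g: "g \<in> A" "g x \<noteq> 0"
      using nonvanishing \<open>x \<in> K\<close> by blast
    obtain q where q: "q \<in> A" "\<forall>y\<in>K. q y = complex_of_real ((cmod (g y))\<^sup>2)"
      using norm_square_closed g(1) by blast
    obtain U where "open U" "U \<inter> K = g -` (- {0}) \<inter> K"
      using continuous[OF g(1)] unfolding continuous_on_open_invariant
      by (meson open_Compl closed_singleton)
    with q g \<open>x \<in> K\<close> show ?thesis
      by (intro exI[of _ q] exI[of _ U]) auto
  qed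
  then obtain Q U where QU: "\<And>x. x \<in> K \<Longrightarrow> Q x \<in> A \<and> (\<forall>y\<in>K. Im (Q x y) = 0 \<and> 0 \<le> Re (Q x y))
          \<and> open (U x) \<and> x \<in> U x \<and> (\<forall>y\<in>U x \<inter> K. 0 < Re (Q x y))"
    by metis
  obtain C where C: "C \<subseteq> K" "finite C" "K \<subseteq> (\<Union>c\<in>C. U c)"
    using compactE_image[OF compact, of K U] QU by blast
  obtain h where h: "h \<in> A" "\<forall>y\<in>K. h y = (\<Sum>c\<in>C. Q c y)"
    using sum_closed[OF C(2), of Q] QU C(1) by blast
  have "Im (h y) = 0 \<and> 0 < Re (h y)" if "y \<in> K" for y
  proof -
    obtain c where "c \<in> C" "y \<in> U c"
      using C(3) \<open>y \<in> K\<close> by blast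
    then have "0 < (\<Sum>c\<in>C. Re (Q c y))"
      using QU C \<open>y \<in> K\<close> by (intro sum_pos2[of C c]) auto
    moreover have "(\<Sum>c\<in>C. Im (Q c y)) = 0"
      using QU C \<open>y \<in> K\<close> by (intro sum.neutral) auto
    ultimately show ?thesis
      using h \<open>y \<in> K\<close> by simp
  qed
  with h(1) show ?thesis
    by blast
qed

definition Re_affine :: "('a \<Rightarrow> real) \<Rightarrow> bool" where
  "Re_affine u \<longleftrightarrow> continuous_on K u \<and> (\<exists>g\<in>A. \<exists>c. \<forall>x\<in>K. u x = Re (g x) + c)"

lemma Re_affine_const: "Re_affine (\<lambda>x. c)"
proof -
  obtain z where "z \<in> A" "\<forall>x\<in>K. z x = 0"
    using zero_closed by blast
  then show ?thesis
    unfolding Re_affine_def by (intro conjI continuous_on_const bexI[of _ z] exI[of _ c]) auto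
qed

lemma Re_affine_add:
  assumes "Re_affine u" "Re_affine v"
  shows "Re_affine (\<lambda>x. u x + v x)"
proof -
  obtain f c g d where fg: "f \<in> A" "\<forall>x\<in>K. u x = Re (f x) + c" "g \<in> A" "\<forall>x\<in>K. v x = Re (g x) + d"
    using assms unfolding Re_affine_def by blast
  obtain s where "s \<in> A" "\<forall>x\<in>K. s x = f x + g x"
    using add_closed fg by blast
  with fg assms show ?thesis
    unfolding Re_affine_def
    by (intro conjI continuous_on_add bexI[of _ s] exI[of _ "c + d"]) auto
qed

lemma Re_affine_mult:
  assumes "Re_affine u" "Re_affine v"
  shows "Re_affine (\<lambda>x. u x * v x)"
proof -
  obtain f c g d where fg: "f \<in> A" "\<forall>x\<in>K. u x = Re (f x) + c" "g \<in> A" "\<forall>x\<in>K. v x = Re (g x) + d"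
    using assms unfolding Re_affine_def by blast
  obtain rf where rf: "rf \<in> A" "\<forall>x\<in>K. rf x = complex_of_real (Re (f x))"
    using Re_closed fg by blast
  obtain rg where rg: "rg \<in> A" "\<forall>x\<in>K. rg x = complex_of_real (Re (g x))"
    using Re_closed fg by blast
  obtain p where p: "p \<in> A" "\<forall>x\<in>K. p x = rf x * rg x"
    using mult_closed rf rg by blast
  obtain sf where sf: "sf \<in> A" "\<forall>x\<in>K. sf x = complex_of_real d * rf x"
    using scale_closed rf by blast
  obtain sg where sg: "sg \<in> A" "\<forall>x\<in>K. sg x = complex_of_real c * rg x"
    using scale_closed rg by blast
  obtain t where t: "t \<in> A" "\<forall>x\<in>K. t x = p x + sf x + sg x"
    using add_closed[OF p(1) sf(1)] add_closed sg(1) by metis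
  have "\<forall>x\<in>K. u x * v x = Re (t x) + c * d"
    using fg rf rg p sf sg t by (auto simp: algebra_simps)
  with t(1) assms show ?thesis
    unfolding Re_affine_def by (intro conjI continuous_on_mult bexI[of _ t] exI[of _ "c * d"]) auto
qed

lemma Re_affine_separates:
  assumes "g \<in> A" "g x \<noteq> g y"
  shows "\<exists>u. Re_affine u \<and> u x \<noteq> u y"
proof (cases "Re (g x) = Re (g y)")
  case False
  with assms show ?thesis
    unfolding Re_affine_def
    by (intro exI[of _ "\<lambda>x. Re (g x)"] conjI continuous_on_Re continuous bexI[of _ g] exI[of _ 0]) auto
next
  case True
  then have "Im (g x) \<noteq> Im (g y)"
    using assms(2) complex_eq_iff by blast
  moreover obtain g' where "g' \<in> A" "\<forall>x\<in>K. g' x = - \<i> * g x"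
    using scale_closed assms(1) by blast
  ultimately show ?thesis
    unfolding Re_affine_def using assms(1)
    by (intro exI[of _ "\<lambda>x. Im (g x)"] conjI continuous_on_Im continuous bexI[of _ g'] exI[of _ 0]) auto
qed

lemma Re_affine_approx:
  assumes separating: "\<And>x y. x \<in> K \<Longrightarrow> y \<in> K \<Longrightarrow> x \<noteq> y \<Longrightarrow> \<exists>g\<in>A. g x \<noteq> g y"
    and "continuous_on K u" "0 < e"
  shows "\<exists>v. Re_affine v \<and> (\<forall>x\<in>K. \<bar>u x - v x\<bar> < e)"
proof (rule Stone_Weierstrass_HOL[where P = Re_affine, OF compact Re_affine_const])
  show "Re_affine v \<Longrightarrow> continuous_on K v" for v
    unfolding Re_affine_def by blast
  show "\<exists>v. Re_affine v \<and> v x \<noteq> v y" if "x \<in> K \<and> y \<in> K \<and> x \<noteq> y" for x y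
    using separating that Re_affine_separates by meson
qed (simp_all add: Re_affine_add Re_affine_mult assms(2,3))

end

locale separating_nonvanishing_subalgebra = selfadjoint_subalgebra +
  assumes separating: "\<And>x y. x \<in> K \<Longrightarrow> y \<in> K \<Longrightarrow> x \<noteq> y \<Longrightarrow> \<exists>g\<in>A. g x \<noteq> g y"
    and nonvanishing: "\<And>x. x \<in> K \<Longrightarrow> \<exists>g\<in>A. g x \<noteq> 0"
begin

lemma Re_approx:
  assumes u: "continuous_on K u" and e: "0 < e"
  shows "\<exists>g\<in>A. \<forall>x\<in>K. \<bar>u x - Re (g x)\<bar> < e"
proof -
  obtain h where h: "h \<in> A" "\<And>x. x \<in> K \<Longrightarrow> Im (h x) = 0 \<and> 0 < Re (h x)"
    using exists_positive[OF nonvanishing] by blast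
  have cont_h: "continuous_on K (\<lambda>x. Re (h x))"
    using continuous[OF h(1)] by (rule continuous_on_Re)
  obtain M where M: "0 < M" "\<And>x. x \<in> K \<Longrightarrow> \<bar>Re (h x)\<bar> \<le> M"
    using compact_imp_bounded[OF compact_continuous_image[OF cont_h compact]]
    unfolding bounded_pos by auto
  have "continuous_on K (\<lambda>x. u x / Re (h x))"
    using u cont_h by (intro continuous_on_divide) (auto dest: h(2))
  moreover have "0 < e / M"
    using e M(1) by simp
  ultimately obtain v where v: "Re_affine v" "\<forall>x\<in>K. \<bar>u x / Re (h x) - v x\<bar> < e / M"
    using Re_affine_approx[OF separating] by blast
  obtain g c where gc: "g \<in> A" "\<forall>x\<in>K. v x = Re (g x) + c"
    using v(1) unfolding Re_affine_def by blast
  obtain p where p: "p \<in> A" "\<forall>x\<in>K. p x = h x * g x"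
    using mult_closed h(1) gc(1) by blast
  obtain q where q: "q \<in> A" "\<forall>x\<in>K. q x = complex_of_real c * h x"
    using scale_closed h(1) by blast
  obtain s where s: "s \<in> A" "\<forall>x\<in>K. s x = p x + q x"
    using add_closed p q by blast
  have "\<bar>u x - Re (s x)\<bar> < e" if "x \<in> K" for x
  proof -
    have "Re (s x) = Re (h x) * v x"
      using s p q gc h(2) \<open>x \<in> K\<close> by (simp add: algebra_simps)
    then have "\<bar>u x - Re (s x)\<bar> = \<bar>Re (h x)\<bar> * \<bar>u x / Re (h x) - v x\<bar>"
      using h(2)[OF \<open>x \<in> K\<close>] by (simp add: field_simps abs_mult[symmetric])
    also have "\<dots> < M * (e / M)"
      using M(1) M(2)[OF \<open>x \<in> K\<close>] v(2) h(2)[OF \<open>x \<in> K\<close>] \<open>x \<in> K\<close>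
      by (intro mult_le_less_imp_less) auto
    also have "\<dots> = e"
      using M(1) by simp
    finally show ?thesis .
  qed
  with s(1) show ?thesis
    by blast
qed

theorem uniformly_dense:
  assumes "K \<noteq> {}"
  shows "uniformly_dense_in_C K A"
  unfolding uniformly_dense_in_C_def
proof (intro allI impI)
  fix f :: "'a \<Rightarrow> complex" and e :: real
  assume f: "continuous_on K f" and e: "0 < e"
  obtain g1 where g1: "g1 \<in> A" "\<forall>x\<in>K. \<bar>Re (f x) - Re (g1 x)\<bar> < e / 2"
    using Re_approx[of "\<lambda>x. Re (f x)" "e / 2"] f e by (auto intro: continuous_on_Re)
  obtain g2 where g2: "g2 \<in> A" "\<forall>x\<in>K. \<bar>Im (f x) - Re (g2 x)\<bar> < e / 2"
    using Re_approx[of "\<lambda>x. Im (f x)" "e / 2"] f e by (auto intro: continuous_on_Im)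
  obtain r1 where r1: "r1 \<in> A" "\<forall>x\<in>K. r1 x = complex_of_real (Re (g1 x))"
    using Re_closed g1(1) by blast
  obtain r2 where r2: "r2 \<in> A" "\<forall>x\<in>K. r2 x = \<i> * complex_of_real (Re (g2 x))"
    using Re_closed[OF g2(1)] scale_closed[where c = \<i>] by metis
  obtain k where k: "k \<in> A" "\<forall>x\<in>K. k x = r1 x + r2 x"
    using add_closed r1 r2 by blast
  have "cmod (f x - k x) \<le> e" if "x \<in> K" for x
  proof -
    have "cmod (f x - k x) \<le> \<bar>Re (f x) - Re (g1 x)\<bar> + \<bar>Im (f x) - Re (g2 x)\<bar>"
      using cmod_le[of "f x - k x"] k r1 r2 \<open>x \<in> K\<close> by simp
    then show ?thesis
      using g1(2) g2(2) \<open>x \<in> K\<close> by fastforce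
  qed
  then have "(SUP x\<in>K. cmod (f x - k x)) \<le> e"
    using assms by (intro cSUP_least) auto
  with k(1) show "\<exists>g\<in>A. (SUP x\<in>K. cmod (f x - g x)) \<le> e"
    by blast
qed

end

theorem corollary2:
  fixes K :: "'a::t2_space set" and A :: "('a \<Rightarrow> complex) set" and K0 :: "'a set"
  assumes "compact K"
    and "\<exists>x\<in>K. \<exists>y\<in>K. x \<noteq> y"
    and "cont_subalgebra K A" and "A \<noteq> {}"
    and "K0 \<subseteq> K"
    and "\<exists>x\<in>K - K0. \<exists>y\<in>K - K0. x \<noteq> y"
    and "\<forall>f. continuous_on K f \<longrightarrow>
           (\<exists>fs::nat \<Rightarrow> 'a \<Rightarrow> complex. (\<forall>n. fs n \<in> A) \<and> (\<forall>x\<in>K0. (\<lambda>n. fs n x) \<longlonglongrightarrow> f x))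
           \<or> (\<exists>g\<in>A. \<forall>x\<in>K0. g x = f x)"
    and "\<forall>x\<in>K - K0. \<forall>y\<in>K - K0. x \<noteq> y \<longrightarrow> (\<exists>g\<in>A. g x \<noteq> g y)"
    and "\<forall>x\<in>K0. \<forall>y\<in>K. x \<noteq> y \<longrightarrow> (\<exists>g\<in>A. g x \<noteq> g y)"
    and "(\<forall>x\<in>K - K0. \<exists>g\<in>A. g x \<noteq> 0) \<or> (\<forall>c::complex. \<exists>g\<in>A. \<forall>x\<in>K. g x = c)"
    and "\<forall>g\<in>A. \<exists>h\<in>A. \<forall>x\<in>K. h x = cnj (g x)"
  shows "uniformly_dense_in_C K A"
proof -
  have separating: "\<exists>g\<in>A. g x \<noteq> g y" if "x \<in> K" "y \<in> K" "x \<noteq> y" for x y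
    using assms(8,9) that by (metis DiffI)
  have nonvanishing: "\<exists>g\<in>A. g x \<noteq> 0" if "x \<in> K" for x
  proof (cases "x \<in> K0")
    case True
    then show ?thesis
      using assms(7) by (intro nonvanishing_if_approximates_one[of x K0]) auto
  next
    case False
    with assms(10) \<open>x \<in> K\<close> show ?thesis
      by (metis DiffI one_neq_zero)
  qed
  interpret separating_nonvanishing_subalgebra K A
    using assms(1,3,4,11) separating nonvanishing by unfold_locales auto
  show ?thesis
    using assms(2) uniformly_dense by blast
qed

end
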